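(* Let $M$ be a manifold with a complete Riemannian metric $g_R$ and associated distance $d_R$. Let $S$ be a closed subset of $M$ and $\mathcal{W}=\{W_\alpha:\alpha\in\mathcal{I}\}$ a collection of open subsets of $M$ covering $S$, such that each $W_\alpha$ is contained in an open subset $\mathcal{C}_\alpha$ whose $d_R$-diameter is smaller than $1$. Then there exists a subcollection $\mathcal{W}'=\{W_j: j\in\mathbb{N}\}\subset\mathcal{W}$ which covers $S$ and is locally finite (i.e., each $p\in\bigcup_j W_j$ has a neighborhood $V$ with $V\cap W_j=\emptyset$ for all but finitely many $j$). Moreover, the collection $\{\mathcal{C}_j: j\in\mathbb{N}\}$, where $\mathcal{C}_j$ is the open set containing $W_j$, is locally finite too. *)

theory Defs
  imports "HOL-Analysis.Analysis"
begin

definition locally_finite_family :: "'i set \<Rightarrow> ('i \<Rightarrow> 'a::topological_space set) \<Rightarrow> bool" where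
  "locally_finite_family J F \<longleftrightarrow>
     (\<forall>p \<in> (\<Union>j\<in>J. F j). \<exists>V. open V \<and> p \<in> V \<and> finite {j\<in>J. V \<inter> F j \<noteq> {}})"

text \<open>Metric spaces in which closed bounded sets are compact (Heine--Borel property).
  By Hopf--Rinow, a (connected) manifold with complete Riemannian metric, equipped
  with its Riemannian distance, is such a space.\<close>
definition proper_metric :: "'a::metric_space itself \<Rightarrow> bool" where
  "proper_metric _ \<longleftrightarrow> (\<forall>K::'a set. bounded K \<and> closed K \<longrightarrow> compact K)"

end

theory Submission
  imports Defs
begin

text \<open>Fix a base point x0 and cut S into the shells K n = S \<inter> {z. n \<le> dist x0 z \<le> n + 1},
  which are compact because the metric is proper. For each n choose finitely many W \<alpha>
  covering K n, each meeting K n. A set C \<alpha> \<supseteq> W \<alpha> of diameter below 1 chosen for K n lies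
  outside the ball of radius n - 1 around x0, so the unit ball around a point p meets only
  sets chosen for the finitely many shells with n \<le> dist x0 p + 2.\<close>

lemma proper_metric_compact_Int_cball:
  fixes S :: "'a::metric_space set"
  assumes "proper_metric TYPE('a)" and "closed S"
  shows "compact (S \<inter> cball x r)"
  using assms unfolding proper_metric_def by (meson bounded_Int bounded_cball closed_Int closed_cball)

lemma UN_annuli_eq_UNIV:
  fixes x :: "'a::metric_space"
  shows "(\<Union>n::nat. cball x (real n + 1) - ball x (real n)) = UNIV"
proof -
  have "y \<in> cball x (real (nat \<lfloor>dist x y\<rfloor>) + 1) - ball x (real (nat \<lfloor>dist x y\<rfloor>))" for y
    using of_int_floor_le[of "dist x y"] real_of_int_floor_add_one_gt[of "dist x y"]
    by (simp add: not_less)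
  then show ?thesis by blast
qed

lemma compact_finite_subcover_meeting:
  assumes "compact K" and "\<forall>\<alpha>\<in>I. open (W \<alpha>)" and "K \<subseteq> (\<Union>\<alpha>\<in>I. W \<alpha>)"
  obtains F where "F \<subseteq> {\<alpha>\<in>I. W \<alpha> \<inter> K \<noteq> {}}" and "finite F" and "K \<subseteq> (\<Union>\<alpha>\<in>F. W \<alpha>)"
proof -
  have "K \<subseteq> (\<Union>\<alpha>\<in>{\<alpha>\<in>I. W \<alpha> \<inter> K \<noteq> {}}. W \<alpha>)"
    using assms(3) by blast
  with assms(1,2) show ?thesis
    by (elim compactE_image) (use that in auto)
qed

lemma proper_metric_shellwise_finite_subcover:
  fixes S :: "'a::metric_space set" and x\<^sub>0 :: 'a
  assumes proper: "proper_metric TYPE('a)" and closed: "closed S"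
    and openW: "\<forall>\<alpha>\<in>I. open (W \<alpha>)" and cover: "S \<subseteq> (\<Union>\<alpha>\<in>I. W \<alpha>)"
  obtains F :: "nat \<Rightarrow> 'i set"
  where "\<And>n. F n \<subseteq> I" and "\<And>n. finite (F n)"
    and "\<And>n \<alpha>. \<alpha> \<in> F n \<Longrightarrow> \<exists>z\<in>W \<alpha>. real n \<le> dist x\<^sub>0 z"
    and "S \<subseteq> (\<Union>n. \<Union>\<alpha>\<in>F n. W \<alpha>)"
proof -
  define K where "K n = S \<inter> cball x\<^sub>0 (real n + 1) - ball x\<^sub>0 (real n)" for n :: nat
  have "\<exists>F. F \<subseteq> {\<alpha>\<in>I. W \<alpha> \<inter> K n \<noteq> {}} \<and> finite F \<and> K n \<subseteq> (\<Union>\<alpha>\<in>F. W \<alpha>)" for n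
  proof -
    have "compact (K n)"
      unfolding K_def using proper_metric_compact_Int_cball[OF proper closed]
      by (metis Diff_eq closed_Compl compact_Int_closed open_ball)
    moreover have "K n \<subseteq> (\<Union>\<alpha>\<in>I. W \<alpha>)"
      using cover unfolding K_def by blast
    ultimately obtain F where "F \<subseteq> {\<alpha>\<in>I. W \<alpha> \<inter> K n \<noteq> {}}" "finite F" "K n \<subseteq> (\<Union>\<alpha>\<in>F. W \<alpha>)"
      by (rule compact_finite_subcover_meeting[OF _ openW])
    then show ?thesis
      by blast
  qed
  then obtain F where "\<forall>n. F n \<subseteq> {\<alpha>\<in>I. W \<alpha> \<inter> K n \<noteq> {}} \<and> finite (F n) \<and> K n \<subseteq> (\<Union>\<alpha>\<in>F n. W \<alpha>)"
    by (meson choice)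
  then have F: "\<And>n. F n \<subseteq> {\<alpha>\<in>I. W \<alpha> \<inter> K n \<noteq> {}}" "\<And>n. finite (F n)"
      "\<And>n. K n \<subseteq> (\<Union>\<alpha>\<in>F n. W \<alpha>)"
    by blast+
  show thesis
  proof
    show "F n \<subseteq> I" and "finite (F n)" for n
      using F(1,2) by blast+
    show "\<exists>z\<in>W \<alpha>. real n \<le> dist x\<^sub>0 z" if "\<alpha> \<in> F n" for n \<alpha>
      using F(1) that unfolding K_def by (fastforce simp: not_less)
    have "S \<subseteq> (\<Union>n. K n)"
      using UN_annuli_eq_UNIV[of x\<^sub>0] unfolding K_def by blast
    then show "S \<subseteq> (\<Union>n. \<Union>\<alpha>\<in>F n. W \<alpha>)"
      using F(3) by fastforce
  qed
qed

lemma finite_members_meeting_ball: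
  fixes x\<^sub>0 p :: "'a::metric_space"
  assumes finite: "\<And>n. finite (F n)"
    and far: "\<And>n j. j \<in> F n \<Longrightarrow> \<exists>z\<in>C j. real n \<le> dist x\<^sub>0 z"
    and small: "\<And>n j. j \<in> F n \<Longrightarrow> bounded (C j) \<and> diameter (C j) \<le> d"
  shows "finite {j \<in> (\<Union>n. F n). ball p r \<inter> C j \<noteq> {}}"
proof -
  define N where "N = nat \<lceil>dist x\<^sub>0 p + r + d\<rceil>"
  have "{j \<in> (\<Union>n. F n). ball p r \<inter> C j \<noteq> {}} \<subseteq> (\<Union>n\<le>N. F n)"
  proof
    fix j assume "j \<in> {j \<in> (\<Union>n. F n). ball p r \<inter> C j \<noteq> {}}"
    then obtain n y where j: "j \<in> F n" and y: "y \<in> C j" "dist p y < r"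
      by auto
    obtain z where z: "z \<in> C j" "real n \<le> dist x\<^sub>0 z"
      using far[OF j] by blast
    have "dist y z \<le> d"
      using small[OF j] y z diameter_bounded_bound order_trans by blast
    moreover have "dist x\<^sub>0 z \<le> dist x\<^sub>0 p + dist p y + dist y z"
      by (metis add.assoc add_left_mono dist_triangle order_trans)
    ultimately have "n \<le> N"
      using y z unfolding N_def by linarith
    with j show "j \<in> (\<Union>n\<le>N. F n)" by blast
  qed
  then show ?thesis
    using finite by (simp add: finite_subset)
qed

lemma locally_finite_family_if_finite_meeting_balls:
  assumes "r > 0" and "\<And>p. finite {j\<in>J. ball p r \<inter> F j \<noteq> {}}"
  shows "locally_finite_family J F"
  unfolding locally_finite_family_def using assms by (metis centre_in_ball open_ball)

lemma locally_finite_family_subsets: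
  assumes "locally_finite_family J C" and "\<forall>j\<in>J. W j \<subseteq> C j"
  shows "locally_finite_family J W"
  unfolding locally_finite_family_def
proof
  fix p assume "p \<in> (\<Union>j\<in>J. W j)"
  then obtain V where "open V" "p \<in> V" and "finite {j\<in>J. V \<inter> C j \<noteq> {}}"
    using assms unfolding locally_finite_family_def by blast
  moreover have "{j\<in>J. V \<inter> W j \<noteq> {}} \<subseteq> {j\<in>J. V \<inter> C j \<noteq> {}}"
    using assms(2) by blast
  ultimately show "\<exists>V. open V \<and> p \<in> V \<and> finite {j\<in>J. V \<inter> W j \<noteq> {}}"
    using finite_subset by blast
qed

theorem lemma4p13:
  fixes S :: "'a::metric_space set"
    and I :: "'i set"
    and W C :: "'i \<Rightarrow> 'a set"
  assumes proper: "proper_metric TYPE('a)"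
    and closedS: "closed S"
    and openW: "\<forall>\<alpha>\<in>I. open (W \<alpha>)"
    and cover: "S \<subseteq> (\<Union>\<alpha>\<in>I. W \<alpha>)"
    and openC: "\<forall>\<alpha>\<in>I. open (C \<alpha>)"
    and WC: "\<forall>\<alpha>\<in>I. W \<alpha> \<subseteq> C \<alpha>"
    and diamC: "\<forall>\<alpha>\<in>I. bounded (C \<alpha>) \<and> diameter (C \<alpha>) < 1"
  shows "\<exists>J \<subseteq> I. countable J \<and> S \<subseteq> (\<Union>j\<in>J. W j)
            \<and> locally_finite_family J W \<and> locally_finite_family J C"
proof -
  fix x\<^sub>0 :: 'a
  obtain F where F: "\<And>n. F n \<subseteq> I" "\<And>n. finite (F n)"
      "\<And>n \<alpha>. \<alpha> \<in> F n \<Longrightarrow> \<exists>z\<in>W \<alpha>. real n \<le> dist x\<^sub>0 z"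
      "S \<subseteq> (\<Union>n. \<Union>\<alpha>\<in>F n. W \<alpha>)"
    using proper_metric_shellwise_finite_subcover[OF proper closedS openW cover, of x\<^sub>0] by blast
  define J where "J = (\<Union>n. F n)"
  have "J \<subseteq> I" and "S \<subseteq> (\<Union>j\<in>J. W j)"
    using F(1,4) unfolding J_def by blast+
  moreover have "countable J"
    using F(2) unfolding J_def by (simp add: countable_finite)
  moreover have "locally_finite_family J C"
  proof (rule locally_finite_family_if_finite_meeting_balls[of 1])
    have "\<exists>z\<in>C \<alpha>. real n \<le> dist x\<^sub>0 z" if "\<alpha> \<in> F n" for n \<alpha>
      using F(1,3) WC that by blast
    moreover have "bounded (C \<alpha>) \<and> diameter (C \<alpha>) \<le> 1" if "\<alpha> \<in> F n" for n \<alpha>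
      using F(1) diamC that by fastforce
    ultimately show "finite {j\<in>J. ball p 1 \<inter> C j \<noteq> {}}" for p
      unfolding J_def by (rule finite_members_meeting_ball[OF F(2)])
  qed simp
  moreover have "locally_finite_family J W"
    using locally_finite_family_subsets \<open>J \<subseteq> I\<close> \<open>locally_finite_family J C\<close> WC by blast
  ultimately show ?thesis
    by blast
qed

end
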